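(* In the setting described in the context, let $(x^k)_{k\in\mathbb N}$ be the sequence generated by Method 2. Then $(x^k)$ is bounded; moreover, with $\bar x:=P_{\operatorname{zer}(A+B)}(x^0)$ and $\rho:=\operatorname{dist}(x^0,\operatorname{zer}(A+B))$, $$(x^k)_{k\in\mathbb N}\subset\mathbb B\Big[\tfrac12(x^0+\bar x);\tfrac12\rho\Big],$$ where $\mathbb B[x;\gamma]:=\{y\in\mathcal H:\|y-x\|\le\gamma\}$.
   Context: Let $\mathcal H$ be a real Hilbert space with inner product $\langle\cdot,\cdot\rangle$ and norm $\|\cdot\|$. Let $A_1:\mathcal H\to\mathcal H$ be $\beta$-cocoercive for some $\beta>0$ (i.e. $\langle A_1x-A_1y,x-y\rangle\ge\beta\|A_1x-A_1y\|^2$ for all $x,y$), let $A_2:\mathcal H\to\mathcal H$ be maximally monotone and uniformly continuous, let $B:\mathcal H\rightrightarrows\mathcal H$ be maximally monotone, and set $A:=A_1+A_2$. Assume $\operatorname{zer}(A+B):=\{x:0\in Ax+Bx\}\neq\emptyset$. $J_{\alpha B}:=(I+\alpha B)^{-1}$ for $\alpha>0$, and $P_C$ denotes the orthogonal projection onto a nonempty closed convex set $C$. Fix $\theta,\delta\in(0,1)$, $\bar\delta>0$ with $1-\delta-\bar\delta>0$, and $\alpha_{-1}>0$ with $\alpha_{-1}\le4\beta\bar\delta$. Conceptual Algorithm: pick $x^0\in\mathcal H$. Given $x^k$ and $\alpha_{k-1}$, for $j\in\mathbb N$ let $\bar x^k_j:=J_{\alpha_{k-1}\theta^jB}(x^k-\alpha_{k-1}\theta^jAx^k)$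 and let $j(k)$ be the smallest $j\in\mathbb N$ with $\alpha_{k-1}\theta^j\langle A_2x^k-A_2\bar x^k_j,x^k-\bar x^k_j\rangle\le\delta\|x^k-\bar x^k_j\|^2$. Set $\alpha_k:=\alpha_{k-1}\theta^{j(k)}$, $\bar x^k:=J_{\alpha_kB}(x^k-\alpha_kAx^k)$, $r_k:=\frac{\bar\delta}{\alpha_k}\|x^k-\bar x^k\|^2$, $T_k:=\{x\in\mathcal H:\langle \frac{x^k-\bar x^k}{\alpha_k}-(A_2x^k-A_2\bar x^k),x-\bar x^k\rangle\le r_k\}$ and $\Gamma_k:=\{x\in\mathcal H:\langle x^0-x^k,x-x^k\rangle\le0\}$. Method 2 sets $x^{k+1}:=P_{T_k\cap\Gamma_k}(x^0)$ and stops if $x^{k+1}=x^k$. *)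

theory Defs
  imports "HOL-Analysis.Analysis"
begin

definition cocoercive :: "real \<Rightarrow> ('a::real_inner \<Rightarrow> 'a) \<Rightarrow> bool" where
  "cocoercive \<beta> T \<longleftrightarrow> (\<forall>x y. inner (T x - T y) (x - y) \<ge> \<beta> * (norm (T x - T y))\<^sup>2)"

definition monotone_op :: "('a::real_inner \<Rightarrow> 'a set) \<Rightarrow> bool" where
  "monotone_op B \<longleftrightarrow> (\<forall>x y u v. u \<in> B x \<longrightarrow> v \<in> B y \<longrightarrow> inner (u - v) (x - y) \<ge> 0)"

definition maximal_monotone :: "('a::real_inner \<Rightarrow> 'a set) \<Rightarrow> bool" where
  "maximal_monotone B \<longleftrightarrow> monotone_op B \<and>
     (\<forall>x u. (\<forall>y v. v \<in> B y \<longrightarrow> inner (u - v) (x - y) \<ge> 0) \<longrightarrow> u \<in> B x)"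

text \<open>Resolvent J_{\<alpha>B} = (I + \<alpha>B)^{-1}: the unique x with z \<in> x + \<alpha> B x.\<close>
definition resolvent :: "real \<Rightarrow> ('a::real_inner \<Rightarrow> 'a set) \<Rightarrow> 'a \<Rightarrow> 'a" where
  "resolvent \<alpha> B z = (THE x. \<exists>u \<in> B x. z = x + \<alpha> *\<^sub>R u)"

definition zer_sum :: "('a::real_vector \<Rightarrow> 'a) \<Rightarrow> ('a \<Rightarrow> 'a set) \<Rightarrow> 'a set" where
  "zer_sum A B = {x. \<exists>u \<in> B x. A x + u = 0}"

definition proj :: "'a::real_inner set \<Rightarrow> 'a \<Rightarrow> 'a" where
  "proj C x = (SOME y. y \<in> C \<and> (\<forall>z \<in> C. dist x y \<le> dist x z))"

text \<open>Trial point \<bar>x^k_j for step size a (= \<alpha>_{k-1} \<theta>^j) at the point x.\<close>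
definition trial_pt :: "('a::real_inner \<Rightarrow> 'a) \<Rightarrow> ('a \<Rightarrow> 'a) \<Rightarrow> ('a \<Rightarrow> 'a set) \<Rightarrow> real \<Rightarrow> 'a \<Rightarrow> 'a" where
  "trial_pt A1 A2 B a x = resolvent a B (x - a *\<^sub>R (A1 x + A2 x))"

text \<open>j(k): smallest j satisfying the linesearch condition, with previous step a = \<alpha>_{k-1}.\<close>
definition jstep :: "('a::real_inner \<Rightarrow> 'a) \<Rightarrow> ('a \<Rightarrow> 'a) \<Rightarrow> ('a \<Rightarrow> 'a set) \<Rightarrow> real \<Rightarrow> real \<Rightarrow> real \<Rightarrow> 'a \<Rightarrow> nat" where
  "jstep A1 A2 B \<theta> \<delta> a x = (LEAST j::nat.
     a * \<theta> ^ j * inner (A2 x - A2 (trial_pt A1 A2 B (a * \<theta> ^ j) x)) (x - trial_pt A1 A2 B (a * \<theta> ^ j) x)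
       \<le> \<delta> * (norm (x - trial_pt A1 A2 B (a * \<theta> ^ j) x))\<^sup>2)"

text \<open>Half-space T_k, with \<alpha> = \<alpha>_k and xk = x^k.\<close>
definition T_set :: "('a::real_inner \<Rightarrow> 'a) \<Rightarrow> ('a \<Rightarrow> 'a) \<Rightarrow> ('a \<Rightarrow> 'a set) \<Rightarrow> real \<Rightarrow> real \<Rightarrow> 'a \<Rightarrow> 'a set" where
  "T_set A1 A2 B \<delta>bar \<alpha> xk =
     (let xb = trial_pt A1 A2 B \<alpha> xk;
          r = (\<delta>bar / \<alpha>) * (norm (xk - xb))\<^sup>2
      in {z. inner ((1 / \<alpha>) *\<^sub>R (xk - xb) - (A2 xk - A2 xb)) (z - xb) \<le> r})"

definition Gamma_set :: "'a::real_inner \<Rightarrow> 'a \<Rightarrow> 'a set" where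
  "Gamma_set x0 xk = {z. inner (x0 - xk) (z - xk) \<le> 0}"

end

(*
  Both half-spaces T_k and Gamma_k contain S = zer(A + B): T_k by monotonicity of B and A2 and
  cocoercivity of A1 (this is where alpha_k <= 4 beta deltabar is needed), and Gamma_(k+1) because
  x^(k+1) is the projection of x^0 onto T_k \<inter> Gamma_k, which contains S. So for
  xbar = P_S(x^0) we get <x^0 - x^k, xbar - x^k> <= 0, which by Thales' theorem says that x^k lies
  in the ball with diameter [x^0, xbar].

  The resolvent exists by Minty's theorem
  (surjectivity of I + alpha B), proved from a finite Kirszbraun extension theorem and the fact that
  bounded closed convex sets with the finite intersection property meet. P_S exists because S is
  closed and convex, being the zero set of the maximally monotone operator A + B; maximality of the
  sum is shown by following the resolvent path J_(tB)(x - t(Ax - u)) as t -> 0, which stays close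
  to x because a uniformly continuous map grows at most affinely.
*)
theory Submission
  imports Defs
begin

section \<open>Nearest points in Hilbert spaces\<close>

lemma two_dist_midpoint:
  fixes a b x :: "'a::real_inner"
  shows "2 * dist x (midpoint a b) = norm ((a - x) + (b - x))"
proof -
  have "(a - x) + (b - x) = 2 *\<^sub>R (midpoint a b - x)"
    by (simp add: midpoint_def algebra_simps scaleR_2)
  then show ?thesis
    by (simp add: dist_norm norm_minus_commute)
qed

lemma mem_cball_midpoint_iff:
  fixes a b x :: "'a::real_inner"
  shows "x \<in> cball (midpoint a b) (dist a b / 2) \<longleftrightarrow> inner (a - x) (b - x) \<le> 0"
proof -
  have "dist a b = norm ((a - x) - (b - x))"
    by (simp add: dist_norm)
  then have "x \<in> cball (midpoint a b) (dist a b / 2) \<longleftrightarrow>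
      norm ((a - x) + (b - x)) \<le> norm ((a - x) - (b - x))"
    using two_dist_midpoint[of x a b] by (auto simp: dist_commute)
  also have "\<dots> \<longleftrightarrow> inner (a - x) (b - x) \<le> 0"
    by (auto simp: norm_le inner_add inner_diff inner_commute)
  finally show ?thesis .
qed

lemma apollonius:
  fixes a b x :: "'a::real_inner"
  shows "(dist a b)\<^sup>2 + 4 * (dist x (midpoint a b))\<^sup>2 = 2 * (dist x a)\<^sup>2 + 2 * (dist x b)\<^sup>2"
proof -
  have "4 * (dist x (midpoint a b))\<^sup>2 = (2 * dist x (midpoint a b))\<^sup>2"
    by (simp add: power2_eq_square)
  also have "\<dots> = (norm ((a - x) + (b - x)))\<^sup>2"
    by (simp only: two_dist_midpoint)
  finally have "4 * (dist x (midpoint a b))\<^sup>2 = (norm ((a - x) + (b - x)))\<^sup>2" .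
  moreover have "dist a b = norm ((a - x) - (b - x))"
    by (simp add: dist_norm)
  ultimately show ?thesis
    by (simp add: dist_norm norm_minus_commute power2_norm_eq_inner inner_add inner_diff inner_commute)
qed

lemma Cauchy_if_dist_squared_le:
  fixes X :: "nat \<Rightarrow> 'a::metric_space"
  assumes bound: "\<And>m n. (dist (X m) (X n))\<^sup>2 \<le> s m + s n" and s: "s \<longlonglongrightarrow> 0"
  shows "Cauchy X"
proof (rule metric_CauchyI)
  fix e :: real
  assume "e > 0"
  then have "\<forall>\<^sub>F n in sequentially. s n < e\<^sup>2 / 2"
    using s by (intro order_tendstoD(2)) auto
  then obtain N where N: "\<And>n. n \<ge> N \<Longrightarrow> s n < e\<^sup>2 / 2"
    by (auto simp: eventually_sequentially)
  have "dist (X m) (X n) < e" if "m \<ge> N" "n \<ge> N" for m n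
  proof -
    have "(dist (X m) (X n))\<^sup>2 < e\<^sup>2"
      using bound[of m n] N[OF that(1)] N[OF that(2)] by linarith
    then show ?thesis
      using \<open>e > 0\<close> by (simp add: power_less_imp_less_base)
  qed
  then show "\<exists>M. \<forall>m\<ge>M. \<forall>n\<ge>M. dist (X m) (X n) < e"
    by blast
qed

lemma seq_tendsto_infdist:
  fixes C :: "'a::metric_space set"
  assumes "C \<noteq> {}"
  obtains y where "\<And>n. y n \<in> C" "(\<lambda>n. dist x (y n)) \<longlonglongrightarrow> infdist x C"
proof -
  have "infdist x C \<in> closure ((\<lambda>z. dist x z) ` C)"
    unfolding infdist_notempty[OF assms]
    using assms by (intro closure_contains_Inf) (auto intro: bdd_belowI[of _ 0])
  then obtain d where d: "\<And>n. d n \<in> (\<lambda>z. dist x z) ` C" "d \<longlonglongrightarrow> infdist x C"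
    unfolding closure_sequential by blast
  then have "\<forall>n. \<exists>z\<in>C. d n = dist x z"
    by blast
  then obtain y where y: "\<And>n. y n \<in> C" "\<And>n. d n = dist x (y n)"
    by metis
  have "d = (\<lambda>n. dist x (y n))"
    using y(2) by (rule ext)
  with d(2) y(1) show ?thesis
    using that by blast
qed

lemma midpoint_in_convex:
  assumes "convex C" "a \<in> C" "b \<in> C"
  shows "midpoint a b \<in> C"
  using convexD[OF assms, of "1/2" "1/2"] by (simp add: midpoint_def scaleR_add_right)

lemma nearest_point_exists:
  fixes C :: "'a::{real_inner,complete_space} set"
  assumes "closed C" "convex C" "C \<noteq> {}"
  obtains p where "p \<in> C" "\<And>z. z \<in> C \<Longrightarrow> dist x p \<le> dist x z"
proof -
  define d where "d = infdist x C"
  have d_le: "d \<le> dist x z" if "z \<in> C" for z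
    using that by (simp add: d_def infdist_le)
  obtain y where y: "\<And>n. y n \<in> C" and yd: "(\<lambda>n. dist x (y n)) \<longlonglongrightarrow> d"
    using seq_tendsto_infdist[OF assms(3)] unfolding d_def by blast
  define e where "e n = 2 * ((dist x (y n))\<^sup>2 - d\<^sup>2)" for n
  have "e \<longlonglongrightarrow> 2 * (d\<^sup>2 - d\<^sup>2)"
    unfolding e_def by (intro tendsto_intros yd)
  then have e: "e \<longlonglongrightarrow> 0"
    by simp
  have "(dist (y m) (y n))\<^sup>2 \<le> e m + e n" for m n
  proof -
    have "d \<le> dist x (midpoint (y m) (y n))"
      using y assms(2) by (intro d_le midpoint_in_convex)
    then have "d\<^sup>2 \<le> (dist x (midpoint (y m) (y n)))\<^sup>2"
      by (simp add: d_def infdist_nonneg power_mono)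
    then show ?thesis
      using apollonius[of "y m" "y n" x] by (simp add: e_def)
  qed
  then have "Cauchy y"
    using e by (rule Cauchy_if_dist_squared_le)
  then obtain p where p: "y \<longlonglongrightarrow> p"
    using convergent_eq_Cauchy by blast
  have "p \<in> C"
    using closed_sequentially[OF assms(1) _ p] y by blast
  moreover have "dist x p = d"
    using tendsto_dist[OF tendsto_const p] yd by (rule LIMSEQ_unique)
  ultimately show ?thesis
    using that d_le by simp
qed

lemma
  fixes C :: "'a::{real_inner,complete_space} set"
  assumes "closed C" "convex C" "C \<noteq> {}"
  shows proj_in: "proj C x \<in> C"
    and proj_le: "z \<in> C \<Longrightarrow> dist x (proj C x) \<le> dist x z"
proof -
  obtain p where "p \<in> C" "\<And>z. z \<in> C \<Longrightarrow> dist x p \<le> dist x z"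
    using nearest_point_exists[OF assms, where x = x] by metis
  then have "\<exists>p. p \<in> C \<and> (\<forall>z\<in>C. dist x p \<le> dist x z)"
    by blast
  then have "proj C x \<in> C \<and> (\<forall>z\<in>C. dist x (proj C x) \<le> dist x z)"
    unfolding proj_def by (rule someI_ex)
  then show "proj C x \<in> C" "z \<in> C \<Longrightarrow> dist x (proj C x) \<le> dist x z"
    by blast+
qed

lemma proj_dot:
  fixes C :: "'a::{real_inner,complete_space} set"
  assumes "closed C" "convex C" "C \<noteq> {}" "z \<in> C"
  shows "inner (x - proj C x) (z - proj C x) \<le> 0"
  using any_closest_point_dot[OF assms(2,1) proj_in[OF assms(1-3)] assms(4)] proj_le[OF assms(1-3)]
  by blast

lemma infdist_eq_dist_proj:
  fixes C :: "'a::{real_inner,complete_space} set"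
  assumes "closed C" "convex C" "C \<noteq> {}"
  shows "infdist x C = dist x (proj C x)"
proof (rule antisym)
  show "infdist x C \<le> dist x (proj C x)"
    using proj_in[OF assms] by (rule infdist_le)
  show "dist x (proj C x) \<le> infdist x C"
    unfolding infdist_notempty[OF assms(3)] using assms(3) proj_le[OF assms] by (intro cINF_greatest)
qed

lemma proj_subset_dist:
  fixes C :: "'a::{real_inner,complete_space} set"
  assumes "closed C" "convex C" "C \<noteq> {}" "closed C'" "convex C'" "C' \<noteq> {}" "C' \<subseteq> C"
  shows "(dist (proj C' x) (proj C x))\<^sup>2 \<le> (dist x (proj C' x))\<^sup>2 - (dist x (proj C x))\<^sup>2"
proof -
  define p p' where "p = proj C x" and "p' = proj C' x"
  have "p' \<in> C"
    using proj_in[OF assms(4-6)] assms(7) by (auto simp: p'_def)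
  then have "inner (x - p) (p' - p) \<le> 0"
    unfolding p_def by (rule proj_dot[OF assms(1-3)])
  moreover have "x - p' = (x - p) - (p' - p)"
    by simp
  ultimately have "(dist x p)\<^sup>2 + (dist p' p)\<^sup>2 \<le> (dist x p')\<^sup>2"
    by (simp add: dist_norm power2_norm_eq_inner inner_diff inner_commute)
  then show ?thesis
    by (simp add: p_def p'_def)
qed

section \<open>Closed convex sets with the finite intersection property\<close>

text \<open>Along \<open>\<subseteq>\<close> the norms \<open>\<parallel>P F\<parallel>\<close> increase and are bounded, so \<open>mono\<close> makes the \<open>P F\<close> with
  \<open>\<parallel>P F\<parallel>\<close> close to the supremum a Cauchy family; it plays the role of weak compactness.\<close>

lemma exists_limit_along_directed_family:
  fixes P :: "'b set \<Rightarrow> 'a::{real_inner,complete_space}"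
  assumes union: "\<And>F G. F \<in> FF \<Longrightarrow> G \<in> FF \<Longrightarrow> F \<union> G \<in> FF" and "FF \<noteq> {}"
    and bounded: "\<And>F. F \<in> FF \<Longrightarrow> norm (P F) \<le> M"
    and mono: "\<And>F G. F \<in> FF \<Longrightarrow> G \<in> FF \<Longrightarrow> F \<subseteq> G \<Longrightarrow>
      (dist (P G) (P F))\<^sup>2 \<le> (norm (P G))\<^sup>2 - (norm (P F))\<^sup>2"
  obtains G p where "\<And>n. G n \<in> FF"
    and "\<And>H. (\<And>n. H n \<in> FF) \<Longrightarrow> (\<And>n. G n \<subseteq> H n) \<Longrightarrow> (\<lambda>n. P (H n)) \<longlonglongrightarrow> p"
proof -
  define D where "D = Sup ((\<lambda>F. norm (P F)) ` FF)"
  have bdd: "bdd_above ((\<lambda>F. norm (P F)) ` FF)"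
    using bounded by (intro bdd_aboveI[where M = M]) auto
  then have le_D: "norm (P F) \<le> D" if "F \<in> FF" for F
    unfolding D_def using that by (auto intro: cSup_upper)
  have "D \<in> closure ((\<lambda>F. norm (P F)) ` FF)"
    unfolding D_def using \<open>FF \<noteq> {}\<close> bdd by (intro closure_contains_Sup) auto
  then obtain d where d: "\<And>n. d n \<in> (\<lambda>F. norm (P F)) ` FF" "d \<longlonglongrightarrow> D"
    unfolding closure_sequential by blast
  then have "\<forall>n. \<exists>F\<in>FF. d n = norm (P F)"
    by blast
  then obtain G where G: "\<And>n. G n \<in> FF" "\<And>n. d n = norm (P (G n))"
    by metis
  define e where "e n = D\<^sup>2 - (norm (P (G n)))\<^sup>2" for n
  have "d = (\<lambda>n. norm (P (G n)))"
    using G(2) by (rule ext)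
  then have "e \<longlonglongrightarrow> D\<^sup>2 - D\<^sup>2"
    unfolding e_def using d(2) by (intro tendsto_intros) simp
  then have e: "e \<longlonglongrightarrow> 0"
    by simp
  have close: "(dist (P H) (P (G n)))\<^sup>2 \<le> e n" if "H \<in> FF" "G n \<subseteq> H" for H n
  proof -
    have "(norm (P H))\<^sup>2 \<le> D\<^sup>2"
      using le_D[OF that(1)] by (simp add: power_mono)
    then show ?thesis
      using mono[OF G(1) that] by (simp add: e_def)
  qed
  have "(dist (P (G m)) (P (G n)))\<^sup>2 \<le> 2 * e m + 2 * e n" for m n
  proof -
    define U where "U = G m \<union> G n"
    have U: "U \<in> FF"
      unfolding U_def by (intro union G(1))
    have "dist (P (G m)) (P (G n)) \<le> dist (P U) (P (G m)) + dist (P U) (P (G n))"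
      by (rule dist_triangle3)
    then have "(dist (P (G m)) (P (G n)))\<^sup>2 \<le> (dist (P U) (P (G m)) + dist (P U) (P (G n)))\<^sup>2"
      by (simp add: power_mono)
    also have "\<dots> \<le> 2 * (dist (P U) (P (G m)))\<^sup>2 + 2 * (dist (P U) (P (G n)))\<^sup>2"
      using sum_squares_bound[of "dist (P U) (P (G m))" "dist (P U) (P (G n))"] by (simp add: power2_sum)
    also have "\<dots> \<le> 2 * e m + 2 * e n"
      using close[OF U, of m] close[OF U, of n] by (simp add: U_def)
    finally show ?thesis .
  qed
  moreover have "(\<lambda>n. 2 * e n) \<longlonglongrightarrow> 0"
    using tendsto_mult_right_zero[OF e] .
  ultimately have "Cauchy (\<lambda>n. P (G n))"
    by (rule Cauchy_if_dist_squared_le)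
  then obtain p where p: "(\<lambda>n. P (G n)) \<longlonglongrightarrow> p"
    using convergent_eq_Cauchy by blast
  have lim: "(\<lambda>n. P (H n)) \<longlonglongrightarrow> p" if H: "\<And>n. H n \<in> FF" "\<And>n. G n \<subseteq> H n" for H
  proof (rule Lim_transform[OF p])
    have bound: "norm (P (H n) - P (G n)) \<le> sqrt (e n)" for n
      using real_le_rsqrt[OF close[OF H(1,2)]] by (simp add: dist_norm)
    have sqrt_e: "(\<lambda>n. sqrt (e n)) \<longlonglongrightarrow> 0"
      using tendsto_real_sqrt[OF e] by simp
    show "(\<lambda>n. P (H n) - P (G n)) \<longlonglongrightarrow> 0"
      by (intro Lim_null_comparison[OF _ sqrt_e] always_eventually allI bound)
  qed
  show ?thesis
    using G(1) lim by (rule that)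
qed

lemma closed_convex_Inter_nonempty:
  fixes \<K> :: "'a::{real_inner,complete_space} set set"
  assumes closed: "\<And>K. K \<in> \<K> \<Longrightarrow> closed K" and convex: "\<And>K. K \<in> \<K> \<Longrightarrow> convex K"
    and "K\<^sub>0 \<in> \<K>" "bounded K\<^sub>0"
    and finite_Inter: "\<And>\<F>. finite \<F> \<Longrightarrow> \<F> \<subseteq> \<K> \<Longrightarrow> \<Inter>\<F> \<noteq> {}"
  shows "\<Inter>\<K> \<noteq> {}"
proof -
  define FF where "FF = {\<F>. finite \<F> \<and> \<F> \<subseteq> \<K>}"
  define I where "I \<F> = \<Inter>(insert K\<^sub>0 \<F>)" for \<F>
  define P where "P \<F> = proj (I \<F>) 0" for \<F>
  have I: "closed (I \<F>)" "convex (I \<F>)" "I \<F> \<noteq> {}" if "\<F> \<in> FF" for \<F>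
  proof -
    have "finite (insert K\<^sub>0 \<F>)" and sub: "insert K\<^sub>0 \<F> \<subseteq> \<K>"
      using that \<open>K\<^sub>0 \<in> \<K>\<close> by (auto simp: FF_def)
    then show "I \<F> \<noteq> {}"
      unfolding I_def by (rule finite_Inter)
    show "closed (I \<F>)"
      unfolding I_def using sub closed by (intro closed_Inter) blast
    show "convex (I \<F>)"
      unfolding I_def using sub convex by (intro convex_Inter) blast
  qed
  have P_in: "P \<F> \<in> I \<F>" if "\<F> \<in> FF" for \<F>
    unfolding P_def using I[OF that] by (rule proj_in)
  obtain M where M: "\<And>x. x \<in> K\<^sub>0 \<Longrightarrow> norm x \<le> M"
    using \<open>bounded K\<^sub>0\<close> by (auto simp: bounded_iff)
  have union: "\<F> \<union> \<G> \<in> FF" if "\<F> \<in> FF" "\<G> \<in> FF" for \<F> \<G>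
    using that by (auto simp: FF_def)
  have nonempty: "FF \<noteq> {}"
    by (auto simp: FF_def)
  have bounded: "norm (P \<F>) \<le> M" if "\<F> \<in> FF" for \<F>
    using P_in[OF that] M by (auto simp: I_def)
  have mono: "(dist (P \<G>) (P \<F>))\<^sup>2 \<le> (norm (P \<G>))\<^sup>2 - (norm (P \<F>))\<^sup>2"
    if "\<F> \<in> FF" "\<G> \<in> FF" "\<F> \<subseteq> \<G>" for \<F> \<G>
    using proj_subset_dist[OF I[OF that(1)] I[OF that(2)], of 0] that(3)
    by (auto simp: P_def I_def)
  obtain G p where G: "\<And>n. G n \<in> FF"
    and lim: "\<And>H. (\<And>n. H n \<in> FF) \<Longrightarrow> (\<And>n. G n \<subseteq> H n) \<Longrightarrow> (\<lambda>n. P (H n)) \<longlonglongrightarrow> p"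
    using exists_limit_along_directed_family[of FF P M, OF union nonempty bounded mono] by blast
  have "p \<in> K" if K: "K \<in> \<K>" for K
  proof (rule closed_sequentially[OF closed[OF K]])
    show "(\<lambda>n. P (insert K (G n))) \<longlonglongrightarrow> p"
      using G K by (intro lim) (auto simp: FF_def)
    show "P (insert K (G n)) \<in> K" for n
      using P_in[of "insert K (G n)"] G K by (auto simp: FF_def I_def)
  qed
  then show ?thesis
    by blast
qed

section \<open>A finite Kirszbraun theorem\<close>

lemma weighted_sum_dist_squared_expand:
  fixes a :: "'i \<Rightarrow> 'a::real_inner"
  assumes "sum \<mu> I = 1"
  shows "(\<Sum>i\<in>I. \<mu> i * (dist x (a i))\<^sup>2)
    = (\<Sum>i\<in>I. \<mu> i * (norm (a i))\<^sup>2) - 2 * inner x (\<Sum>i\<in>I. \<mu> i *\<^sub>R a i) + (norm x)\<^sup>2"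
proof -
  have "(\<Sum>i\<in>I. \<mu> i * (dist x (a i))\<^sup>2)
      = (\<Sum>i\<in>I. \<mu> i * (norm (a i))\<^sup>2) - 2 * (\<Sum>i\<in>I. \<mu> i * inner x (a i)) + (\<Sum>i\<in>I. \<mu> i) * (norm x)\<^sup>2"
    by (simp add: dist_norm power2_norm_eq_inner inner_diff inner_commute algebra_simps
        sum.distrib sum_subtractf sum_distrib_left sum_distrib_right)
  then show ?thesis
    using assms by (simp add: inner_sum_right)
qed

lemma weighted_sum_dist_squared:
  fixes a :: "'i \<Rightarrow> 'a::real_inner"
  assumes "sum \<mu> I = 1"
  shows "(\<Sum>i\<in>I. \<mu> i * (dist x (a i))\<^sup>2)
    = (\<Sum>i\<in>I. \<Sum>j\<in>I. \<mu> i * \<mu> j * (dist (a i) (a j))\<^sup>2) / 2 + (dist x (\<Sum>i\<in>I. \<mu> i *\<^sub>R a i))\<^sup>2"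
proof -
  define m where "m = (\<Sum>i\<in>I. \<mu> i *\<^sub>R a i)"
  define Q where "Q = (\<Sum>i\<in>I. \<mu> i * (norm (a i))\<^sup>2)"
  have expand: "(\<Sum>i\<in>I. \<mu> i * (dist y (a i))\<^sup>2) = Q - 2 * inner y m + (norm y)\<^sup>2" for y
    unfolding Q_def m_def by (rule weighted_sum_dist_squared_expand[OF assms])
  have "(\<Sum>i\<in>I. \<Sum>j\<in>I. \<mu> i * \<mu> j * (dist (a i) (a j))\<^sup>2)
      = (\<Sum>i\<in>I. \<mu> i * (Q - 2 * inner (a i) m + (norm (a i))\<^sup>2))"
    by (simp add: expand[symmetric] sum_distrib_left mult.assoc)
  also have "\<dots> = (\<Sum>i\<in>I. \<mu> i) * Q - 2 * (\<Sum>i\<in>I. \<mu> i * inner (a i) m) + Q"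
    by (simp add: algebra_simps sum.distrib sum_subtractf sum_distrib_left sum_distrib_right Q_def[symmetric])
  also have "(\<Sum>i\<in>I. \<mu> i * inner (a i) m) = inner m m"
    by (simp add: m_def inner_sum_left)
  finally have pairs: "(\<Sum>i\<in>I. \<Sum>j\<in>I. \<mu> i * \<mu> j * (dist (a i) (a j))\<^sup>2) = 2 * Q - 2 * inner m m"
    using assms by simp
  have "(dist x m)\<^sup>2 = (norm x)\<^sup>2 - 2 * inner x m + inner m m"
    by (simp add: dist_norm power2_norm_eq_inner inner_diff inner_commute)
  then show ?thesis
    unfolding expand pairs m_def[symmetric] by (simp add: diff_divide_distrib)
qed

lemma convex_hull_image_weights:
  fixes c :: "'i \<Rightarrow> 'a::real_vector"
  assumes "finite I" "x \<in> convex hull (c ` I)"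
  obtains \<mu> where "\<And>i. i \<in> I \<Longrightarrow> 0 \<le> \<mu> i" "sum \<mu> I = 1" "x = (\<Sum>i\<in>I. \<mu> i *\<^sub>R c i)"
proof -
  define W where "W = {\<Sum>i\<in>I. \<mu> i *\<^sub>R c i | \<mu>. (\<forall>i\<in>I. 0 \<le> \<mu> i) \<and> sum \<mu> I = 1}"
  have "c i \<in> W" if "i \<in> I" for i
  proof -
    have "(\<Sum>j\<in>I. (if j = i then 1 else 0) *\<^sub>R c j) = (\<Sum>j\<in>I. if j = i then c j else 0)"
      by (rule sum.cong) auto
    then show ?thesis
      unfolding W_def using that \<open>finite I\<close>
      by (intro CollectI exI[of _ "\<lambda>j. if j = i then 1 else 0"]) (simp add: sum.delta')
  qed
  moreover have "convex W"
  proof (rule convexI)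
    fix y1 y2 u v
    assume "y1 \<in> W" "y2 \<in> W" and uv: "0 \<le> u" "0 \<le> v" "u + v = (1::real)"
    then obtain \<mu>1 \<mu>2 where
      \<mu>1: "\<forall>i\<in>I. 0 \<le> \<mu>1 i" "sum \<mu>1 I = 1" "y1 = (\<Sum>i\<in>I. \<mu>1 i *\<^sub>R c i)" and
      \<mu>2: "\<forall>i\<in>I. 0 \<le> \<mu>2 i" "sum \<mu>2 I = 1" "y2 = (\<Sum>i\<in>I. \<mu>2 i *\<^sub>R c i)"
      unfolding W_def by blast
    have "u *\<^sub>R y1 + v *\<^sub>R y2 = (\<Sum>i\<in>I. (u * \<mu>1 i + v * \<mu>2 i) *\<^sub>R c i)"
      by (simp add: \<mu>1(3) \<mu>2(3) scaleR_add_left sum.distrib scaleR_sum_right)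
    moreover have "(\<Sum>i\<in>I. u * \<mu>1 i + v * \<mu>2 i) = 1"
      by (simp add: sum.distrib flip: sum_distrib_left) (simp add: \<mu>1(2) \<mu>2(2) uv(3))
    ultimately show "u *\<^sub>R y1 + v *\<^sub>R y2 \<in> W"
      unfolding W_def using \<mu>1(1) \<mu>2(1) uv by fastforce
  qed
  ultimately have "convex hull (c ` I) \<subseteq> W"
    by (intro hull_minimal) auto
  then show ?thesis
    using assms(2) that unfolding W_def by blast
qed

lemma weighted_excess_nonpos:
  fixes c z :: "'i \<Rightarrow> 'a::real_inner"
  assumes "\<And>i. i \<in> I \<Longrightarrow> 0 \<le> \<mu> i" "sum \<mu> I = 1"
    and lipschitz: "\<And>i j. i \<in> I \<Longrightarrow> j \<in> I \<Longrightarrow> dist (c i) (c j) \<le> dist (z i) (z j)"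
  shows "(\<Sum>i\<in>I. \<mu> i * ((dist (\<Sum>j\<in>I. \<mu> j *\<^sub>R c j) (c i))\<^sup>2 - (norm (z i))\<^sup>2)) \<le> 0"
proof -
  have "(\<Sum>i\<in>I. \<mu> i * ((dist (\<Sum>j\<in>I. \<mu> j *\<^sub>R c j) (c i))\<^sup>2 - (norm (z i))\<^sup>2))
      = (\<Sum>i\<in>I. \<mu> i * (dist (\<Sum>j\<in>I. \<mu> j *\<^sub>R c j) (c i))\<^sup>2) - (\<Sum>i\<in>I. \<mu> i * (dist 0 (z i))\<^sup>2)"
    by (simp add: algebra_simps sum_subtractf)
  also have "\<dots> \<le> (\<Sum>i\<in>I. \<Sum>j\<in>I. \<mu> i * \<mu> j * (dist (c i) (c j))\<^sup>2) / 2
      - (\<Sum>i\<in>I. \<Sum>j\<in>I. \<mu> i * \<mu> j * (dist (z i) (z j))\<^sup>2) / 2"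
    unfolding weighted_sum_dist_squared[OF assms(2)] by simp
  also have "\<dots> \<le> 0"
  proof -
    have "\<mu> i * \<mu> j * (dist (c i) (c j))\<^sup>2 \<le> \<mu> i * \<mu> j * (dist (z i) (z j))\<^sup>2"
      if "i \<in> I" "j \<in> I" for i j
      using that assms(1) lipschitz[of i j] by (intro mult_left_mono power_mono) auto
    then show ?thesis
      by (simp add: sum_mono)
  qed
  finally show ?thesis .
qed

lemma norm_diff_less_towards_nearest:
  fixes x p z :: "'a::real_inner"
  assumes "inner (x - p) (z - p) \<le> 0" "p \<noteq> x" "0 < t" "t < 2"
  shows "norm (x + t *\<^sub>R (p - x) - z) < norm (x - z)"
proof -
  have "inner (x - z) (p - x) = inner (z - p) (x - p) - (norm (p - x))\<^sup>2"
    by (simp add: power2_norm_eq_inner inner_diff inner_commute)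
  also have "\<dots> \<le> - (norm (p - x))\<^sup>2"
    using assms(1) by (simp add: inner_commute)
  finally have "2 * t * inner (x - z) (p - x) \<le> 2 * t * - (norm (p - x))\<^sup>2"
    using assms(3) by (intro mult_left_mono) auto
  moreover have "(norm ((x - z) + t *\<^sub>R (p - x)))\<^sup>2
      = (norm (x - z))\<^sup>2 + 2 * t * inner (x - z) (p - x) + t\<^sup>2 * (norm (p - x))\<^sup>2"
    by (simp add: power2_norm_eq_inner inner_add_left inner_add_right inner_commute algebra_simps)
      (simp add: power2_eq_square)
  moreover have "t\<^sup>2 * (norm (p - x))\<^sup>2 < 2 * t * (norm (p - x))\<^sup>2"
    using assms(2-4) by (simp add: power2_eq_square)
  ultimately have "(norm ((x - z) + t *\<^sub>R (p - x)))\<^sup>2 < (norm (x - z))\<^sup>2"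
    by linarith
  then show ?thesis
    by (simp add: power_less_imp_less_base algebra_simps)
qed

lemma exists_point_closer_to_all_centres:
  fixes c :: "'i \<Rightarrow> 'a::{real_inner,complete_space}" and r :: "'i \<Rightarrow> real"
  assumes "finite S" "I \<subseteq> S" "I \<noteq> {}" "x \<notin> convex hull (c ` I)"
    and active: "\<And>i. i \<in> I \<Longrightarrow> (norm (x - c i))\<^sup>2 - r i \<le> m"
    and inactive: "\<And>i. i \<in> S - I \<Longrightarrow> (norm (x - c i))\<^sup>2 - r i < m"
    and "convex K" "x \<in> K" "c ` I \<subseteq> K"
  obtains y where "y \<in> K" "\<And>i. i \<in> S \<Longrightarrow> (norm (y - c i))\<^sup>2 - r i < m"
proof -
  define C where "C = convex hull (c ` I)"
  have C: "closed C" "convex C" "C \<noteq> {}"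
    unfolding C_def using finite_subset[OF assms(2,1)] assms(3)
    by (auto intro: compact_imp_closed finite_imp_compact_convex_hull)
  define p where "p = proj C x"
  have "p \<noteq> x"
    using proj_in[OF C, of x] assms(4) by (metis C_def p_def)
  define y where "y t = x + t *\<^sub>R (p - x)" for t :: real
  have "\<forall>\<^sub>F t in at_right 0. (norm (y t - c i))\<^sup>2 - r i < m" if "i \<in> S" for i
  proof (cases "i \<in> I")
    case True
    have "inner (x - p) (c i - p) \<le> 0"
      unfolding p_def using C True by (intro proj_dot) (auto simp: C_def hull_inc)
    then have "norm (y t - c i) < norm (x - c i)" if "0 < t" "t < 1" for t
      unfolding y_def using \<open>p \<noteq> x\<close> that by (intro norm_diff_less_towards_nearest) auto
    then have "\<forall>\<^sub>F t in at_right 0. (norm (y t - c i))\<^sup>2 < (norm (x - c i))\<^sup>2"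
      unfolding eventually_at_right_field
      by (intro exI[of _ 1]) (auto intro: power_strict_mono)
    then show ?thesis
      by (rule eventually_mono) (use active[OF True] in linarith)
  next
    case False
    have "((\<lambda>t. (norm (y t - c i))\<^sup>2 - r i) \<longlongrightarrow> (norm (y 0 - c i))\<^sup>2 - r i) (at_right 0)"
      unfolding y_def by (intro tendsto_intros)
    then show ?thesis
      using inactive[of i] that False by (intro order_tendstoD(2)) (auto simp: y_def)
  qed
  then have "\<forall>\<^sub>F t in at_right 0. \<forall>i\<in>S. (norm (y t - c i))\<^sup>2 - r i < m"
    using \<open>finite S\<close> by (intro eventually_ball_finite ballI)
  moreover have "\<forall>\<^sub>F t in at_right (0::real). 0 < t \<and> t < 1"
    unfolding eventually_at_right_field by (intro exI[of _ 1]) auto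
  ultimately have "\<forall>\<^sub>F t in at_right 0. (\<forall>i\<in>S. (norm (y t - c i))\<^sup>2 - r i < m) \<and> 0 < t \<and> t < 1"
    by (rule eventually_conj)
  then obtain t where t: "0 < t" "t < 1" "\<And>i. i \<in> S \<Longrightarrow> (norm (y t - c i))\<^sup>2 - r i < m"
    using eventually_happens trivial_limit_at_right_real by blast
  have "p \<in> K"
    using proj_in[OF C, of x] hull_minimal[of "c ` I" K convex, OF assms(9,7)] by (auto simp: p_def C_def)
  then have "y t \<in> K"
    using convexD[OF assms(7,8) \<open>p \<in> K\<close>, of "1 - t" t] t by (simp add: y_def algebra_simps)
  then show ?thesis
    using t(3) that by blast
qed

lemma continuous_on_Max_image:
  fixes f :: "'i \<Rightarrow> 'a::topological_space \<Rightarrow> 'b::linorder_topology"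
  assumes "finite S" "S \<noteq> {}" "\<And>i. i \<in> S \<Longrightarrow> continuous_on K (f i)"
  shows "continuous_on K (\<lambda>x. Max ((\<lambda>i. f i x) ` S))"
  using assms
proof (induction S rule: finite_ne_induct)
  case (singleton i)
  then show ?case
    by simp
next
  case (insert i S)
  then show ?case
    by (simp add: continuous_on_max)
qed

text \<open>Minimise the largest excess \<open>\<parallel>y - c i\<parallel>\<^sup>2 - \<parallel>z i\<parallel>\<^sup>2\<close> over the hull of the centres. If the minimum
  were positive, the minimiser would lie in the hull of the active centres, and averaging the
  Lipschitz condition with its barycentric weights would bound the minimum by
  \<open>-\<parallel>\<Sum>\<mu> i z i\<parallel>\<^sup>2\<close>.\<close>

lemma kirszbraun_finite:
  fixes c z :: "'i \<Rightarrow> 'a::{real_inner,complete_space}"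
  assumes "finite S" and lipschitz: "\<And>i j. i \<in> S \<Longrightarrow> j \<in> S \<Longrightarrow> dist (c i) (c j) \<le> dist (z i) (z j)"
  obtains x where "\<And>i. i \<in> S \<Longrightarrow> dist x (c i) \<le> norm (z i)"
proof (cases "S = {}")
  case False
  define f where "f i y = (norm (y - c i))\<^sup>2 - (norm (z i))\<^sup>2" for i y
  define K where "K = convex hull (c ` S)"
  have "compact K" "K \<noteq> {}"
    unfolding K_def using \<open>finite S\<close> False by (auto intro: finite_imp_compact_convex_hull)
  moreover have "continuous_on K (\<lambda>y. Max ((\<lambda>i. f i y) ` S))"
    unfolding f_def using \<open>finite S\<close> False by (intro continuous_on_Max_image continuous_intros)
  ultimately have "\<exists>x\<in>K. \<forall>y\<in>K. Max ((\<lambda>i. f i x) ` S) \<le> Max ((\<lambda>i. f i y) ` S)"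
    by (rule continuous_attains_inf)
  then obtain x where "x \<in> K" and x_min: "\<And>y. y \<in> K \<Longrightarrow> Max ((\<lambda>i. f i x) ` S) \<le> Max ((\<lambda>i. f i y) ` S)"
    by blast
  define m where "m = Max ((\<lambda>i. f i x) ` S)"
  define I where "I = {i \<in> S. f i x = m}"
  have le_m: "f i x \<le> m" if "i \<in> S" for i
    unfolding m_def using \<open>finite S\<close> that by (intro Max_ge) auto
  have "m \<in> (\<lambda>i. f i x) ` S"
    unfolding m_def using \<open>finite S\<close> False by (intro Max_in) auto
  then have "I \<noteq> {}"
    by (auto simp: I_def)
  have "m \<le> 0"
  proof (rule ccontr)
    assume "\<not> m \<le> 0"
    have "x \<in> convex hull (c ` I)"
    proof (rule ccontr)
      assume "x \<notin> convex hull (c ` I)"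
      moreover have "I \<subseteq> S" "convex K" "c ` I \<subseteq> K"
        by (auto simp: I_def K_def hull_inc)
      moreover have "(norm (x - c i))\<^sup>2 - (norm (z i))\<^sup>2 \<le> m" if "i \<in> I" for i
        using that by (simp add: I_def f_def)
      moreover have "(norm (x - c i))\<^sup>2 - (norm (z i))\<^sup>2 < m" if "i \<in> S - I" for i
        using that le_m[of i] by (auto simp: I_def f_def)
      ultimately obtain y where "y \<in> K" "\<And>i. i \<in> S \<Longrightarrow> f i y < m"
        using exists_point_closer_to_all_centres[of S I x c "\<lambda>i. (norm (z i))\<^sup>2" m K]
          \<open>finite S\<close> \<open>I \<noteq> {}\<close> \<open>x \<in> K\<close> unfolding f_def by blast
      then have "Max ((\<lambda>i. f i y) ` S) < m"
        using \<open>finite S\<close> False by simp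
      then show False
        using x_min[OF \<open>y \<in> K\<close>] by (simp add: m_def)
    qed
    moreover have "finite I"
      using \<open>finite S\<close> by (simp add: I_def)
    ultimately obtain \<mu> where \<mu>: "\<And>i. i \<in> I \<Longrightarrow> 0 \<le> \<mu> i" "sum \<mu> I = 1" "x = (\<Sum>i\<in>I. \<mu> i *\<^sub>R c i)"
      using convex_hull_image_weights[of I x c] by blast
    have "m = (\<Sum>i\<in>I. \<mu> i * f i x)"
      using \<mu>(2) by (simp add: I_def flip: sum_distrib_right)
    also have "\<dots> \<le> 0"
      unfolding f_def \<mu>(3) dist_norm[symmetric]
      using \<mu>(1,2) lipschitz by (intro weighted_excess_nonpos) (auto simp: I_def)
    finally show False
      using \<open>\<not> m \<le> 0\<close> by simp
  qed
  have "dist x (c i) \<le> norm (z i)" if "i \<in> S" for i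
  proof -
    have "(dist x (c i))\<^sup>2 \<le> (norm (z i))\<^sup>2"
      using le_m[OF that] \<open>m \<le> 0\<close> unfolding f_def dist_norm by linarith
    then show ?thesis
      by (rule power2_le_imp_le) simp
  qed
  then show ?thesis
    by (rule that)
qed (rule that[of 0], simp)

section \<open>Minty's theorem and the resolvent\<close>

lemma maximal_monotone_monoD:
  assumes "maximal_monotone B" "u \<in> B x" "v \<in> B y"
  shows "0 \<le> inner (u - v) (x - y)"
  using assms unfolding maximal_monotone_def monotone_op_def by blast

lemma maximal_monotone_maxD:
  assumes "maximal_monotone B" "\<And>y v. v \<in> B y \<Longrightarrow> 0 \<le> inner (u - v) (x - y)"
  shows "u \<in> B x"
  using assms unfolding maximal_monotone_def by blast

lemma norm_diff_le_norm_add: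
  fixes a b :: "'a::real_inner"
  assumes "0 \<le> inner a b"
  shows "norm (a - b) \<le> norm (a + b)"
  using assms by (simp add: norm_le inner_add inner_diff inner_commute)

text \<open>\<open>w = x + \<alpha> u\<close> with \<open>u \<in> B x\<close> holds iff, for every \<open>v \<in> B y\<close>, \<open>x\<close> lies in the ball with
  diameter \<open>[y, w - \<alpha> v]\<close>; monotonicity makes these balls satisfy the Kirszbraun condition.\<close>

lemma maximal_monotone_surj:
  fixes B :: "'a::{real_inner,complete_space} \<Rightarrow> 'a set"
  assumes mm: "maximal_monotone B" and "\<alpha> > 0"
  obtains x u where "u \<in> B x" "w = x + \<alpha> *\<^sub>R u"
proof -
  define G where "G = {(y, v). v \<in> B y}"
  define c where "c q = midpoint (fst q) (w - \<alpha> *\<^sub>R snd q)" for q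
  define z where "z q = (1/2) *\<^sub>R (w - \<alpha> *\<^sub>R snd q - fst q)" for q
  define D where "D q = cball (c q) (norm (z q))" for q
  have D_eq: "D q = cball (midpoint (fst q) (w - \<alpha> *\<^sub>R snd q)) (dist (fst q) (w - \<alpha> *\<^sub>R snd q) / 2)" for q
    by (simp add: D_def c_def z_def dist_norm norm_minus_commute)
  have lipschitz: "dist (c p) (c q) \<le> dist (z p) (z q)" if "p \<in> G" "q \<in> G" for p q
  proof -
    define Y V where "Y = fst p - fst q" and "V = \<alpha> *\<^sub>R (snd p - snd q)"
    have "0 \<le> inner Y V"
      using maximal_monotone_monoD[OF mm, of "snd p" "fst p" "snd q" "fst q"] that \<open>\<alpha> > 0\<close>
      by (auto simp: G_def Y_def V_def inner_commute case_prod_beta)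
    moreover have "c p - c q = (1/2) *\<^sub>R (Y - V)" "z p - z q = - ((1/2) *\<^sub>R (Y + V))"
      by (simp_all add: c_def z_def Y_def V_def midpoint_def algebra_simps)
    ultimately show ?thesis
      by (simp add: dist_norm norm_diff_le_norm_add)
  qed
  have "\<exists>x. \<forall>q\<in>G. x \<in> D q"
  proof (cases "G = {}")
    case False
    then obtain q\<^sub>0 where "q\<^sub>0 \<in> G"
      by blast
    have "\<Inter>(D ` G) \<noteq> {}"
    proof (rule closed_convex_Inter_nonempty)
      show "D q\<^sub>0 \<in> D ` G" "bounded (D q\<^sub>0)"
        using \<open>q\<^sub>0 \<in> G\<close> by (auto simp: D_def)
      show "\<Inter>\<F> \<noteq> {}" if \<F>: "finite \<F>" "\<F> \<subseteq> D ` G" for \<F>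
      proof -
        obtain G' where G': "G' \<subseteq> G" "finite G'" "\<F> = D ` G'"
          using finite_subset_image[OF \<F>] by blast
        then obtain x where "\<And>q. q \<in> G' \<Longrightarrow> dist x (c q) \<le> norm (z q)"
          using kirszbraun_finite[of G' c z] lipschitz by blast
        then have "x \<in> \<Inter>\<F>"
          by (auto simp: G'(3) D_def dist_commute)
        then show ?thesis
          by blast
      qed
    qed (auto simp: D_def)
    then show ?thesis
      by blast
  qed simp
  then obtain x where x: "\<And>y v. v \<in> B y \<Longrightarrow> x \<in> D (y, v)"
    by (auto simp: G_def)
  define u where "u = (w - x) /\<^sub>R \<alpha>"
  have "u \<in> B x"
  proof (rule maximal_monotone_maxD[OF mm])
    fix y v
    assume "v \<in> B y"
    then have "inner (y - x) (w - \<alpha> *\<^sub>R v - x) \<le> 0"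
      using x[of v y] mem_cball_midpoint_iff[of x y "w - \<alpha> *\<^sub>R v"]
      by (simp only: D_eq fst_conv snd_conv)
    moreover have "w - \<alpha> *\<^sub>R v - x = \<alpha> *\<^sub>R (u - v)"
      using \<open>\<alpha> > 0\<close> by (simp add: u_def algebra_simps)
    moreover have "inner (y - x) (\<alpha> *\<^sub>R (u - v)) = - (\<alpha> * inner (u - v) (x - y))"
      by (simp add: inner_commute inner_diff_left inner_diff_right algebra_simps)
    ultimately show "0 \<le> inner (u - v) (x - y)"
      using \<open>\<alpha> > 0\<close> by (simp add: zero_le_mult_iff)
  qed
  moreover have "w = x + \<alpha> *\<^sub>R u"
    using \<open>\<alpha> > 0\<close> by (simp add: u_def)
  ultimately show ?thesis
    by (rule that)
qed

lemma resolvent_mem: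
  fixes B :: "'a::{real_inner,complete_space} \<Rightarrow> 'a set"
  assumes mm: "maximal_monotone B" and "\<alpha> > 0"
  shows "(w - resolvent \<alpha> B w) /\<^sub>R \<alpha> \<in> B (resolvent \<alpha> B w)"
proof -
  have unique: "x\<^sub>1 = x\<^sub>2"
    if "u\<^sub>1 \<in> B x\<^sub>1" "w = x\<^sub>1 + \<alpha> *\<^sub>R u\<^sub>1" "u\<^sub>2 \<in> B x\<^sub>2" "w = x\<^sub>2 + \<alpha> *\<^sub>R u\<^sub>2" for x\<^sub>1 x\<^sub>2 u\<^sub>1 u\<^sub>2
  proof -
    have diff: "x\<^sub>1 - x\<^sub>2 = \<alpha> *\<^sub>R (u\<^sub>2 - u\<^sub>1)"
      using that(2,4) by (simp add: algebra_simps)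
    have "0 \<le> inner (u\<^sub>1 - u\<^sub>2) (x\<^sub>1 - x\<^sub>2)"
      using mm that(1,3) by (rule maximal_monotone_monoD)
    also have "\<dots> = - \<alpha> * (norm (u\<^sub>1 - u\<^sub>2))\<^sup>2"
      unfolding diff by (simp add: power2_norm_eq_inner inner_diff inner_commute algebra_simps)
    finally have "u\<^sub>1 = u\<^sub>2"
      using \<open>\<alpha> > 0\<close> by (simp add: mult_le_0_iff)
    then show ?thesis
      using diff by simp
  qed
  obtain x u where "u \<in> B x" "w = x + \<alpha> *\<^sub>R u"
    using maximal_monotone_surj[OF assms] by blast
  then have "\<exists>!x. \<exists>u\<in>B x. w = x + \<alpha> *\<^sub>R u"
    using unique by blast
  then have "\<exists>u\<in>B (resolvent \<alpha> B w). w = resolvent \<alpha> B w + \<alpha> *\<^sub>R u"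
    unfolding resolvent_def by (rule theI')
  then obtain u where "u \<in> B (resolvent \<alpha> B w)" "w - resolvent \<alpha> B w = \<alpha> *\<^sub>R u"
    by (auto simp: algebra_simps)
  then show ?thesis
    using \<open>\<alpha> > 0\<close> by simp
qed

section \<open>Sums of maximally monotone operators\<close>

lemma uniformly_continuous_on_affine_bound:
  fixes f :: "'a::real_normed_vector \<Rightarrow> 'b::real_normed_vector"
  assumes "uniformly_continuous_on UNIV f"
  obtains L where "L \<ge> 0" "\<And>x y. norm (f y - f x) \<le> 1 + L * norm (y - x)"
proof -
  obtain d where "d > 0" and d: "\<And>x y. dist y x < d \<Longrightarrow> dist (f y) (f x) < 1"
    using assms unfolding uniformly_continuous_on_def by (metis UNIV_I zero_less_one)
  have "norm (f y - f x) \<le> 1 + (1 / d) * norm (y - x)" for x y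
  proof -
    define n where "n = Suc (nat \<lfloor>norm (y - x) / d\<rfloor>)"
    have "real (nat \<lfloor>norm (y - x) / d\<rfloor>) = \<lfloor>norm (y - x) / d\<rfloor>"
      using \<open>d > 0\<close> by simp
    then have n: "norm (y - x) / d < real n" "real n \<le> 1 + norm (y - x) / d"
      unfolding n_def of_nat_Suc using floor_correct[of "norm (y - x) / d"] by linarith+
    have "n > 0"
      by (simp add: n_def)
    define p where "p k = x + (real k / real n) *\<^sub>R (y - x)" for k
    have "dist (p (Suc k)) (p k) < d" for k
    proof -
      have "dist (p (Suc k)) (p k) = norm (y - x) / real n"
        by (simp add: p_def dist_norm diff_divide_distrib[symmetric] flip: scaleR_diff_left)
      also have "\<dots> < d"
        using n(1) \<open>d > 0\<close> \<open>n > 0\<close> by (simp add: field_simps)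
      finally show ?thesis .
    qed
    then have step: "norm (f (p (Suc k)) - f (p k)) \<le> 1" for k
      using d by (simp add: dist_norm less_imp_le)
    have "p n = y" "p 0 = x"
      using \<open>n > 0\<close> by (simp_all add: p_def)
    then have "f y - f x = (\<Sum>k<n. f (p (Suc k)) - f (p k))"
      using sum_lessThan_telescope[of "\<lambda>k. f (p k)" n] by simp
    also have "norm \<dots> \<le> (\<Sum>k<n. norm (f (p (Suc k)) - f (p k)))"
      by (rule norm_sum)
    also have "\<dots> \<le> real n"
      using sum_mono[of "{..<n}", OF step] by simp
    also have "\<dots> \<le> 1 + (1 / d) * norm (y - x)"
      using n(2) by simp
    finally show ?thesis .
  qed
  moreover have "1 / d \<ge> 0"
    using \<open>d > 0\<close> by simp
  ultimately show ?thesis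
    using that by blast
qed

lemma resolvent_path_dist_le:
  fixes A :: "'a::{real_inner,complete_space} \<Rightarrow> 'a"
  assumes mm: "maximal_monotone B" and var: "\<And>y v. v \<in> B y \<Longrightarrow> 0 \<le> inner (A y + v - u) (y - x)"
    and "t > 0"
  defines "y \<equiv> resolvent t B (x - t *\<^sub>R (A x - u))"
  shows "norm (y - x) \<le> t * norm (A y - A x)"
proof -
  have "(x - t *\<^sub>R (A x - u) - y) /\<^sub>R t \<in> B y"
    unfolding y_def using resolvent_mem[OF mm \<open>t > 0\<close>] .
  moreover have "A y + (x - t *\<^sub>R (A x - u) - y) /\<^sub>R t - u = A y - A x - (y - x) /\<^sub>R t"
    using \<open>t > 0\<close> by (simp add: algebra_simps)
  ultimately have "0 \<le> inner (A y - A x - (y - x) /\<^sub>R t) (y - x)"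
    using var by metis
  then have "(norm (y - x))\<^sup>2 / t \<le> inner (A y - A x) (y - x)"
    by (simp add: inner_diff_left power2_norm_eq_inner divide_inverse mult.commute)
  also have "\<dots> \<le> norm (A y - A x) * norm (y - x)"
    by (rule norm_cauchy_schwarz)
  finally show ?thesis
    using \<open>t > 0\<close> by (cases "y = x") (simp_all add: power2_eq_square field_simps)
qed

text \<open>The affine growth of \<open>A\<close> keeps \<open>\<parallel>y t - x\<parallel> \<le> 2 t\<close> for small \<open>t\<close>, so \<open>y t \<rightarrow> x\<close>, and then
  \<open>\<parallel>x - y t\<parallel> / t \<le> \<parallel>A (y t) - A x\<parallel> \<rightarrow> 0\<close>.\<close>

lemma resolvent_path_tendsto:
  fixes A :: "'a::{real_inner,complete_space} \<Rightarrow> 'a"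
  assumes uc: "uniformly_continuous_on UNIV A" and mm: "maximal_monotone B"
    and var: "\<And>y v. v \<in> B y \<Longrightarrow> 0 \<le> inner (A y + v - u) (y - x)"
  defines "y \<equiv> \<lambda>t. resolvent t B (x - t *\<^sub>R (A x - u))"
  shows "(y \<longlongrightarrow> x) (at_right 0)"
    and "((\<lambda>t. (x - t *\<^sub>R (A x - u) - y t) /\<^sub>R t) \<longlongrightarrow> u - A x) (at_right 0)"
proof -
  have y_close: "norm (y t - x) \<le> t * norm (A (y t) - A x)" if "t > 0" for t
    unfolding y_def using mm var that by (rule resolvent_path_dist_le)
  obtain L where "L \<ge> 0" and L: "\<And>x y. norm (A y - A x) \<le> 1 + L * norm (y - x)"
    using uniformly_continuous_on_affine_bound[OF uc] by blast
  define small where "small t \<longleftrightarrow> 0 < t \<and> t * L \<le> 1/2" for t :: real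
  have ev_small: "\<forall>\<^sub>F t in at_right 0. small t"
    unfolding eventually_at_right_field small_def using \<open>L \<ge> 0\<close>
    by (intro exI[of _ "1 / (2 * L + 2)"]) (auto simp: field_simps)
  have y_bound: "norm (y t - x) \<le> 2 * t" if "small t" for t
  proof -
    have "t * norm (A (y t) - A x) \<le> t * (1 + L * norm (y t - x))"
      using L[of x "y t"] that by (intro mult_left_mono) (auto simp: small_def norm_minus_commute)
    moreover have "t * L * norm (y t - x) \<le> norm (y t - x) / 2"
      using that mult_right_mono[of "t * L" "1/2" "norm (y t - x)"] by (simp add: small_def)
    ultimately show ?thesis
      using y_close[of t] that by (simp add: small_def algebra_simps)
  qed
  have "((\<lambda>t. 2 * t) \<longlongrightarrow> 2 * 0) (at_right (0::real))"
    by (intro tendsto_mult tendsto_const tendsto_ident_at)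
  then have "((\<lambda>t. y t - x) \<longlongrightarrow> 0) (at_right 0)"
    using Lim_null_comparison[OF eventually_mono[OF ev_small y_bound]] by simp
  then show y_lim: "(y \<longlongrightarrow> x) (at_right 0)"
    by (rule LIM_zero_cancel)
  have "isCont A x"
    using uniformly_continuous_imp_continuous[OF uc] by (simp add: continuous_on_eq_continuous_at)
  then have "((\<lambda>t. A (y t)) \<longlongrightarrow> A x) (at_right 0)"
    using y_lim by (rule isCont_tendsto_compose)
  then have A_lim: "((\<lambda>t. A (y t) - A x) \<longlongrightarrow> 0) (at_right 0)"
    by (rule LIM_zero)
  have quotient_bound: "norm ((x - y t) /\<^sub>R t) \<le> norm (A (y t) - A x)" if "small t" for t
  proof -
    have "t > 0"
      using that by (simp add: small_def)
    then have "norm ((x - y t) /\<^sub>R t) = norm (y t - x) / t"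
      by (simp add: norm_minus_commute divide_inverse_commute)
    also have "\<dots> \<le> norm (A (y t) - A x)"
      using y_close[OF \<open>t > 0\<close>] \<open>t > 0\<close> by (simp add: pos_divide_le_eq mult.commute)
    finally show ?thesis .
  qed
  have "((\<lambda>t. (x - y t) /\<^sub>R t) \<longlongrightarrow> 0) (at_right 0)"
    by (rule Lim_null_comparison[OF eventually_mono[OF ev_small quotient_bound] tendsto_norm_zero[OF A_lim]])
  then have "((\<lambda>t. (x - y t) /\<^sub>R t - (A x - u)) \<longlongrightarrow> u - A x) (at_right 0)"
    using tendsto_diff[OF _ tendsto_const[of "A x - u"]] by fastforce
  moreover have "(x - y t) /\<^sub>R t - (A x - u) = (x - t *\<^sub>R (A x - u) - y t) /\<^sub>R t" if "small t" for t
    using that by (simp add: small_def algebra_simps)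
  ultimately show "((\<lambda>t. (x - t *\<^sub>R (A x - u) - y t) /\<^sub>R t) \<longlongrightarrow> u - A x) (at_right 0)"
    by (rule Lim_transform_eventually[OF _ eventually_mono[OF ev_small]])
qed

text \<open>Maximality: if \<open>(x, u)\<close> is monotonically related to the graph of the sum, the points
  \<open>v t \<in> B (y t)\<close> along the resolvent path converge to \<open>(x, u - A x)\<close>, which is then monotonically
  related to the graph of \<open>B\<close>.\<close>

lemma maximal_monotone_add:
  fixes A :: "'a::{real_inner,complete_space} \<Rightarrow> 'a"
  assumes mono_A: "\<And>x y. 0 \<le> inner (A x - A y) (x - y)"
    and uc: "uniformly_continuous_on UNIV A" and mm: "maximal_monotone B"
  shows "maximal_monotone (\<lambda>z. (\<lambda>v. A z + v) ` B z)"
  unfolding maximal_monotone_def monotone_op_def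
proof (intro conjI allI impI)
  fix x y u v
  assume "u \<in> (\<lambda>v. A x + v) ` B x" "v \<in> (\<lambda>v. A y + v) ` B y"
  then obtain u' v' where "u' \<in> B x" "v' \<in> B y" "u = A x + u'" "v = A y + v'"
    by blast
  then have "inner (u - v) (x - y) = inner (A x - A y) (x - y) + inner (u' - v') (x - y)"
    by (simp add: algebra_simps inner_add_left inner_diff_left)
  then show "0 \<le> inner (u - v) (x - y)"
    using mono_A[of x y] maximal_monotone_monoD[OF mm \<open>u' \<in> B x\<close> \<open>v' \<in> B y\<close>] by linarith
next
  fix x u
  assume max: "\<forall>y v. v \<in> (\<lambda>v. A y + v) ` B y \<longrightarrow> 0 \<le> inner (u - v) (x - y)"
  have var: "0 \<le> inner (A y + v - u) (y - x)" if "v \<in> B y" for y v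
  proof -
    have "0 \<le> inner (u - (A y + v)) (x - y)"
      using max that by blast
    then show ?thesis
      by (simp add: inner_commute inner_diff_left inner_diff_right inner_add_left)
  qed
  define y where "y t = resolvent t B (x - t *\<^sub>R (A x - u))" for t
  define v where "v t = (x - t *\<^sub>R (A x - u) - y t) /\<^sub>R t" for t
  have y_lim: "(y \<longlongrightarrow> x) (at_right 0)" and v_lim: "(v \<longlongrightarrow> u - A x) (at_right 0)"
    using resolvent_path_tendsto[OF uc mm var] unfolding y_def v_def by (auto simp: fun_eq_iff)
  have "u - A x \<in> B x"
  proof (rule maximal_monotone_maxD[OF mm])
    fix y' v'
    assume "v' \<in> B y'"
    then have "0 \<le> inner (v t - v') (y t - y')" if "t > 0" for t
      using maximal_monotone_monoD[OF mm resolvent_mem[OF mm that]] by (simp add: v_def y_def)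
    then have "\<forall>\<^sub>F t in at_right 0. 0 \<le> inner (v t - v') (y t - y')"
      by (rule eventually_at_rightI[of 0 1]) auto
    moreover have "((\<lambda>t. inner (v t - v') (y t - y')) \<longlongrightarrow> inner (u - A x - v') (x - y')) (at_right 0)"
      by (intro tendsto_inner tendsto_diff v_lim y_lim tendsto_const)
    ultimately show "0 \<le> inner (u - A x - v') (x - y')"
      by (intro tendsto_lowerbound[OF _ _ trivial_limit_at_right_real])
  qed
  then show "u \<in> (\<lambda>v. A x + v) ` B x"
    by (rule rev_image_eqI) simp
qed

lemma maximal_monotone_zeros_eq:
  assumes "maximal_monotone T"
  shows "{x. 0 \<in> T x} = (\<Inter>y. \<Inter>v\<in>T y. {x. inner v x \<le> inner v y})"
proof (intro equalityI subsetI)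
  fix x
  assume "x \<in> {x. 0 \<in> T x}"
  then show "x \<in> (\<Inter>y. \<Inter>v\<in>T y. {x. inner v x \<le> inner v y})"
    using maximal_monotone_monoD[OF assms] by (fastforce simp: inner_diff_right)
next
  fix x
  assume "x \<in> (\<Inter>y. \<Inter>v\<in>T y. {x. inner v x \<le> inner v y})"
  then have "0 \<le> inner (0 - v) (x - y)" if "v \<in> T y" for y v
    using that by (auto simp: inner_diff_right)
  then show "x \<in> {x. 0 \<in> T x}"
    using maximal_monotone_maxD[OF assms] by blast
qed

lemma
  assumes "maximal_monotone T"
  shows closed_maximal_monotone_zeros: "closed {x. 0 \<in> T x}"
    and convex_maximal_monotone_zeros: "convex {x. 0 \<in> T x}"
  unfolding maximal_monotone_zeros_eq[OF assms]
  by (intro closed_INT convex_INT ballI closed_halfspace_le convex_halfspace_le)+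

lemma zer_sum_eq: "zer_sum A B = {x. 0 \<in> (\<lambda>v. A x + v) ` B x}"
  by (auto simp: zer_sum_def)

section \<open>The method\<close>

lemma cocoercive_monotone:
  assumes "cocoercive \<beta> A" "\<beta> \<ge> 0"
  shows "0 \<le> inner (A x - A y) (x - y)"
  using assms unfolding cocoercive_def by (meson order_trans zero_le_mult_iff zero_le_power2)

lemma cocoercive_lipschitz:
  assumes "cocoercive \<beta> A" "\<beta> > 0"
  shows "(1 / \<beta>)-lipschitz_on UNIV A"
proof (rule lipschitz_onI)
  fix x y
  have "\<beta> * (norm (A x - A y))\<^sup>2 \<le> norm (A x - A y) * norm (x - y)"
    using assms(1) norm_cauchy_schwarz[of "A x - A y" "x - y"] unfolding cocoercive_def
    by (meson order_trans)
  then have "\<beta> * norm (A x - A y) \<le> norm (x - y)"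
    by (cases "A x = A y") (simp_all add: power2_eq_square)
  then show "dist (A x) (A y) \<le> 1 / \<beta> * dist x y"
    using assms(2) by (simp add: dist_norm field_simps)
qed (use assms(2) in simp)

lemma cocoercive_inner_le:
  assumes "cocoercive \<beta> A" "\<beta> > 0"
  shows "inner (A x - A z) (z - y) \<le> (norm (x - y))\<^sup>2 / (4 * \<beta>)"
proof -
  define n e where "n = norm (A x - A z)" and "e = norm (x - y)"
  have "inner (A x - A z) (z - y) = inner (A x - A z) (x - y) - inner (A x - A z) (x - z)"
    by (simp add: inner_diff_right)
  also have "\<dots> \<le> n * e - \<beta> * n\<^sup>2"
    using norm_cauchy_schwarz[of "A x - A z" "x - y"] assms(1)[unfolded cocoercive_def, rule_format, of x z]
    unfolding n_def e_def by linarith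
  also have "\<dots> \<le> e\<^sup>2 / (4 * \<beta>)"
  proof -
    txt \<open>Young's inequality.\<close>
    have "0 \<le> (2 * \<beta> * n - e)\<^sup>2"
      by simp
    then show ?thesis
      using assms(2) by (simp add: field_simps power2_eq_square)
  qed
  finally show ?thesis
    by (simp add: e_def)
qed

lemma
  fixes A1 A2 :: "'a::{real_inner,complete_space} \<Rightarrow> 'a"
  assumes "\<beta> > 0" "cocoercive \<beta> A1" "maximal_monotone (\<lambda>z. {A2 z})"
    and "uniformly_continuous_on UNIV A2" "maximal_monotone B"
  shows closed_convex_zer_sum: "closed (zer_sum (\<lambda>z. A1 z + A2 z) B)" "convex (zer_sum (\<lambda>z. A1 z + A2 z) B)"
proof -
  have "0 \<le> inner ((A1 x + A2 x) - (A1 y + A2 y)) (x - y)" for x y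
    using cocoercive_monotone[OF assms(2), of x y] \<open>\<beta> > 0\<close>
      maximal_monotone_monoD[OF assms(3), of "A2 x" x "A2 y" y]
    by (simp add: algebra_simps inner_add_left inner_diff_left)
  moreover have "uniformly_continuous_on UNIV (\<lambda>z. A1 z + A2 z)"
    using lipschitz_on_uniformly_continuous[OF cocoercive_lipschitz[OF assms(2,1)]] assms(4)
    by (rule uniformly_continuous_on_add)
  ultimately have "maximal_monotone (\<lambda>z. (\<lambda>v. A1 z + A2 z + v) ` B z)"
    using assms(5) by (rule maximal_monotone_add)
  then show "closed (zer_sum (\<lambda>z. A1 z + A2 z) B)" "convex (zer_sum (\<lambda>z. A1 z + A2 z) B)"
    unfolding zer_sum_eq by (rule closed_maximal_monotone_zeros convex_maximal_monotone_zeros)+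
qed

lemma halfspace_le_shift: "{z. inner n (z - p) \<le> r} = {z. inner n z \<le> r + inner n p}"
  by (auto simp: inner_diff_right)

lemma
  shows closed_T_set: "closed (T_set A1 A2 B \<delta>bar \<alpha> x)"
    and convex_T_set: "convex (T_set A1 A2 B \<delta>bar \<alpha> x)"
  unfolding T_set_def Let_def halfspace_le_shift
  by (rule closed_halfspace_le convex_halfspace_le)+

lemma
  shows closed_Gamma_set: "closed (Gamma_set x\<^sub>0 x)"
    and convex_Gamma_set: "convex (Gamma_set x\<^sub>0 x)"
  unfolding Gamma_set_def halfspace_le_shift
  by (rule closed_halfspace_le convex_halfspace_le)+

lemma zer_sum_subset_T_set:
  fixes A1 A2 :: "'a::{real_inner,complete_space} \<Rightarrow> 'a"
  assumes "cocoercive \<beta> A1" "\<beta> > 0" and mono_A2: "maximal_monotone (\<lambda>z. {A2 z})"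
    and mm: "maximal_monotone B" and "0 < \<alpha>" "\<alpha> \<le> 4 * \<beta> * \<delta>bar"
  shows "zer_sum (\<lambda>z. A1 z + A2 z) B \<subseteq> T_set A1 A2 B \<delta>bar \<alpha> x"
proof
  fix z
  assume "z \<in> zer_sum (\<lambda>z. A1 z + A2 z) B"
  then have Bz: "- (A1 z + A2 z) \<in> B z"
    by (auto simp: zer_sum_def add_eq_0_iff)
  define xb where "xb = trial_pt A1 A2 B \<alpha> x"
  define u where "u = (x - \<alpha> *\<^sub>R (A1 x + A2 x) - xb) /\<^sub>R \<alpha>"
  have Bxb: "u \<in> B xb"
    unfolding u_def xb_def trial_pt_def using resolvent_mem[OF mm \<open>0 < \<alpha>\<close>] .
  have "(x - xb) /\<^sub>R \<alpha> - (A2 x - A2 xb) = (u - - (A1 z + A2 z)) + (A1 x - A1 z) + (A2 xb - A2 z)"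
    using \<open>0 < \<alpha>\<close> by (simp add: u_def algebra_simps)
  then have "inner ((x - xb) /\<^sub>R \<alpha> - (A2 x - A2 xb)) (z - xb)
      = inner (u - - (A1 z + A2 z)) (z - xb) + inner (A1 x - A1 z) (z - xb) + inner (A2 xb - A2 z) (z - xb)"
    by (simp only: inner_add_left)
  moreover have "inner (u - - (A1 z + A2 z)) (z - xb) \<le> 0"
    using maximal_monotone_monoD[OF mm Bxb Bz] by (simp add: inner_diff_right)
  moreover have "inner (A2 xb - A2 z) (z - xb) \<le> 0"
    using maximal_monotone_monoD[OF mono_A2, of "A2 xb" xb "A2 z" z] by (simp add: inner_diff_right)
  moreover have "inner (A1 x - A1 z) (z - xb) \<le> (norm (x - xb))\<^sup>2 / (4 * \<beta>)"
    using assms(1,2) by (rule cocoercive_inner_le)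
  moreover have "1 / (4 * \<beta>) \<le> \<delta>bar / \<alpha>"
    using assms(2,5,6) by (simp add: field_simps)
  then have "(norm (x - xb))\<^sup>2 / (4 * \<beta>) \<le> (\<delta>bar / \<alpha>) * (norm (x - xb))\<^sup>2"
    using mult_right_mono[of "1 / (4 * \<beta>)" "\<delta>bar / \<alpha>" "(norm (x - xb))\<^sup>2"] by simp
  ultimately have "inner ((x - xb) /\<^sub>R \<alpha> - (A2 x - A2 xb)) (z - xb) \<le> (\<delta>bar / \<alpha>) * (norm (x - xb))\<^sup>2"
    by linarith
  then show "z \<in> T_set A1 A2 B \<delta>bar \<alpha> x"
    by (simp add: T_set_def Let_def xb_def divide_inverse_commute)
qed

lemma linesearch_step_bounds:
  fixes a :: "nat \<Rightarrow> real"
  assumes "a 0 > 0" "0 < \<theta>" "\<theta> \<le> 1" "\<And>k. a (Suc k) = a k * \<theta> ^ j k"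
  shows "0 < a k \<and> a k \<le> a 0"
proof (induction k)
  case (Suc k)
  have "0 < \<theta> ^ j k" "\<theta> ^ j k \<le> 1"
    using assms(2,3) by (simp_all add: power_le_one)
  then have "0 < a k * \<theta> ^ j k" "a k * \<theta> ^ j k \<le> a k"
    using Suc.IH by (simp_all add: mult_left_le)
  then show ?case
    unfolding assms(4)[of k] using Suc.IH by (intro conjI) linarith+
qed (use assms(1) in simp)

lemma subset_Gamma_set_of_projection_iterates:
  fixes x :: "nat \<Rightarrow> 'a::{real_inner,complete_space}"
  assumes "S \<noteq> {}" and S_sub: "\<And>k. S \<subseteq> T k" and "\<And>k. closed (T k)" "\<And>k. convex (T k)"
    and step: "\<And>k. x (Suc k) = proj (T k \<inter> Gamma_set (x 0) (x k)) (x 0)"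
  shows "S \<subseteq> Gamma_set (x 0) (x k)"
proof (induction k)
  case 0
  show ?case
    by (auto simp: Gamma_set_def)
next
  case (Suc k)
  define C where "C = T k \<inter> Gamma_set (x 0) (x k)"
  have "S \<subseteq> C"
    using S_sub Suc.IH by (auto simp: C_def)
  moreover have "closed C" "convex C" "C \<noteq> {}"
    unfolding C_def using assms(1,3,4) \<open>S \<subseteq> C\<close>
    by (auto simp: C_def intro!: closed_Int convex_Int closed_Gamma_set convex_Gamma_set)
  ultimately show ?case
    using proj_dot[of C _ "x 0"] step[of k] by (auto simp: Gamma_set_def C_def)
qed

theorem lemma4p13:
  fixes A1 A2 :: "'a::{real_inner, complete_space} \<Rightarrow> 'a"
    and B :: "'a \<Rightarrow> 'a set"
    and \<beta> \<theta> \<delta> \<delta>bar \<alpha>m1 :: real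
    and x :: "nat \<Rightarrow> 'a"
    and a :: "nat \<Rightarrow> real"
  assumes "\<beta> > 0" and "cocoercive \<beta> A1"
    and "maximal_monotone (\<lambda>z. {A2 z})" and "uniformly_continuous_on UNIV A2"
    and "maximal_monotone B"
    and "zer_sum (\<lambda>z. A1 z + A2 z) B \<noteq> {}"
    and "0 < \<theta>" "\<theta> < 1" "0 < \<delta>" "\<delta> < 1" "\<delta>bar > 0" "1 - \<delta> - \<delta>bar > 0"
    and "\<alpha>m1 > 0" "\<alpha>m1 \<le> 4 * \<beta> * \<delta>bar"
    and a0: "a 0 = \<alpha>m1"
    and a_step: "\<And>k. a (Suc k) = a k * \<theta> ^ jstep A1 A2 B \<theta> \<delta> (a k) (x k)"
    and x_step: "\<And>k. x (Suc k) = proj (T_set A1 A2 B \<delta>bar (a (Suc k)) (x k) \<inter> Gamma_set (x 0) (x k)) (x 0)"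
  shows "bounded (range x) \<and>
    (\<forall>k. x k \<in> cball ((1/2) *\<^sub>R (x 0 + proj (zer_sum (\<lambda>z. A1 z + A2 z) B) (x 0)))
                    ((1/2) * infdist (x 0) (zer_sum (\<lambda>z. A1 z + A2 z) B)))"
proof -
  define S where "S = zer_sum (\<lambda>z. A1 z + A2 z) B"
  have S: "closed S" "convex S" "S \<noteq> {}"
    using closed_convex_zer_sum[OF assms(1-5)] assms(6) by (simp_all add: S_def)
  have steps: "0 < a k \<and> a k \<le> \<alpha>m1" for k
    using linesearch_step_bounds[of a \<theta>] a_step a0 assms(7,8,13) by fastforce
  have T_sub: "S \<subseteq> T_set A1 A2 B \<delta>bar (a (Suc k)) (x k)" for k
    unfolding S_def using assms(1,2,3,5,14) steps[of "Suc k"] by (intro zer_sum_subset_T_set) auto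
  have Gamma: "S \<subseteq> Gamma_set (x 0) (x k)" for k
    by (rule subset_Gamma_set_of_projection_iterates[OF S(3) T_sub closed_T_set convex_T_set x_step])
  define x\<^sub>S where "x\<^sub>S = proj S (x 0)"
  have "inner (x 0 - x k) (x\<^sub>S - x k) \<le> 0" for k
    using Gamma[of k] proj_in[OF S] by (auto simp: Gamma_set_def x\<^sub>S_def)
  then have "x k \<in> cball (midpoint (x 0) x\<^sub>S) (dist (x 0) x\<^sub>S / 2)" for k
    by (simp only: mem_cball_midpoint_iff)
  moreover have "bounded (range x)"
    using calculation by (intro bounded_subset[OF bounded_cball]) blast
  ultimately show ?thesis
    using infdist_eq_dist_proj[OF S] by (simp add: S_def x\<^sub>S_def midpoint_def)
qed

end
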